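(* Let $\mathbb X$ be the stationary Markov chain on $I\cup\mathcal E$ with transition matrix $P^\pi$ and stationary law $\pi$, let $\mathbb Y^{(\mathcal A)}$ be the stationary Markov chain on $I^2\times\mathcal E^*$ with transition matrix $\mathcal A$ and stationary law $\eta$, and let $\mathbb G$ be an i.i.d. sequence on $\mathcal E$ with law $\pi(\delta\mid\mathcal E)=\pi(\delta)/\pi(\mathcal E)$, so $h(\mathbb G)=-\sum_{\delta\in\mathcal E}\pi(\delta\mid\mathcal E)\log\pi(\delta\mid\mathcal E)$. Then $$h(\mathbb X)=\pi(I)\,h(\mathbb Y^{(\mathcal A)})+\pi(\mathcal E)^2h(\mathbb G)-\pi(I)\pi(\mathcal E)\log\pi(I)-\pi(\mathcal E)^2\log\pi(\mathcal E).$$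
   Context: $I$ and $\mathcal E$ are disjoint countable sets, $\mathcal E\ne\emptyset$; $P$ is a stochastic matrix on $I\cup\mathcal E$ with all $\epsilon\in\mathcal E$ absorbing, irreducible restriction $P_I$ to $I$, $\sum_{i\in I}P(i,\mathcal E)>0$ where $P(i,\mathcal E)=\sum_{\epsilon\in\mathcal E}P(i,\epsilon)$, and $\mathcal E$ reached a.s. from every $i\in I$. $\mu$ is a quasi-stationary distribution of $P_I$: a probability on $I$ with $\mu^tP_I=\gamma\mu^t$, $\gamma=\sum_{i,j\in I}\mu(i)P(i,j)\in(0,1)$. $\pi$ is the probability on $I\cup\mathcal E$ with $\pi(i)=\gamma\mu(i)$ ($i\in I$), $\pi(\epsilon)=\sum_{i\in I}\mu(i)P(i,\epsilon)$ ($\epsilon\in\mathcal E$); $\pi(I)=\gamma$, $\pi(\mathcal E)=1-\gamma$. $P^\pi$ equals $P$ on rows $i\in I$ and has every row $\epsilon\in\mathcal E$ equal to $\pi$; $\pi$ is stationary for $P^\pi$. Let $\mathcal E^*=\mathcal E\cup\{o\}$, $o\notin I\cup\mathcal E$. The matrix $\mathcal A$ on $I^2\times\mathcal E^*$: $\mathcal A((i,j,\delta),(l,k,\epsilon))=0$ if $l\ne j$, $=P(j,k)$ if $l=j,\epsilon=o$, $=P(j,\epsilon)\mu(k)$ if $l=j,\epsilon\in\mathcal E$; its stationary law is $\eta(i,j,\delta)=\mu(i)P(i,j)\mathbf 1(\delta=o)+\mu(i)P(i,\delta)\mu(j)\mathbf 1(\delta\in\mathcal E)$. For a stationary Markov chain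 $\mathbb Z$ with transition matrix $R$ and stationary law $\nu$, $h(\mathbb Z)=-\sum_a\nu(a)\sum_bR(a,b)\log R(a,b)$ (with $0\log0=0$). *)

theory Defs
  imports "HOL-Analysis.Analysis"
begin

text \<open>Entropy rate of a stationary Markov chain on the countable state set S with
  transition matrix R and stationary law nu:
  h = - sum_a nu(a) sum_b R(a,b) log R(a,b), with 0 log 0 = 0 (ln 0 = 0 in Isabelle).
  Every summand is nonnegative (R(a,b) in [0,1]), so the value is taken in [0,\<infinity>].\<close>
definition ent_rate :: "('s \<Rightarrow> 's \<Rightarrow> real) \<Rightarrow> ('s \<Rightarrow> real) \<Rightarrow> 's set \<Rightarrow> ennreal" where
  "ent_rate R \<nu> S =
     (\<integral>\<^sup>+ a. ennreal (\<nu> a) * (\<integral>\<^sup>+ b. ennreal (- (R a b * ln (R a b))) \<partial>count_space S) \<partial>count_space S)"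

primrec hit_prob :: "'a set \<Rightarrow> 'a set \<Rightarrow> ('a \<Rightarrow> 'a \<Rightarrow> real) \<Rightarrow> nat \<Rightarrow> 'a \<Rightarrow> real" where
  "hit_prob I E P 0 x = (if x \<in> E then 1 else 0)"
| "hit_prob I E P (Suc n) x =
     (if x \<in> E then 1 else (\<Sum>\<^sub>\<infinity> y \<in> I \<union> E. P x y * hit_prob I E P n y))"

definition qsd_gamma :: "'a set \<Rightarrow> ('a \<Rightarrow> 'a \<Rightarrow> real) \<Rightarrow> ('a \<Rightarrow> real) \<Rightarrow> real" where
  "qsd_gamma I P \<mu> = (\<Sum>\<^sub>\<infinity> (i, j) \<in> I \<times> I. \<mu> i * P i j)"

definition pi_law :: "'a set \<Rightarrow> 'a set \<Rightarrow> ('a \<Rightarrow> 'a \<Rightarrow> real) \<Rightarrow> ('a \<Rightarrow> real) \<Rightarrow> 'a \<Rightarrow> real" where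
  "pi_law I E P \<mu> x =
     (if x \<in> I then qsd_gamma I P \<mu> * \<mu> x
      else if x \<in> E then (\<Sum>\<^sub>\<infinity> i \<in> I. \<mu> i * P i x) else 0)"

definition P_pi :: "'a set \<Rightarrow> 'a set \<Rightarrow> ('a \<Rightarrow> 'a \<Rightarrow> real) \<Rightarrow> ('a \<Rightarrow> real) \<Rightarrow> 'a \<Rightarrow> 'a \<Rightarrow> real" where
  "P_pi I E P \<mu> x y = (if x \<in> E then pi_law I E P \<mu> y else P x y)"

text \<open>The matrix A on I^2 \<times> E*, with E* = E \<union> {o}; the extra point o is the parameter ob.\<close>
definition A_mat :: "'a \<Rightarrow> ('a \<Rightarrow> 'a \<Rightarrow> real) \<Rightarrow> ('a \<Rightarrow> real)
                     \<Rightarrow> 'a \<times> 'a \<times> 'a \<Rightarrow> 'a \<times> 'a \<times> 'a \<Rightarrow> real" where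
  "A_mat ob P \<mu> s t =
     (case s of (i, j, \<delta>) \<Rightarrow> case t of (l, k, \<epsilon>) \<Rightarrow>
        if l \<noteq> j then 0 else if \<epsilon> = ob then P j k else P j \<epsilon> * \<mu> k)"

definition eta_law :: "'a set \<Rightarrow> 'a \<Rightarrow> ('a \<Rightarrow> 'a \<Rightarrow> real) \<Rightarrow> ('a \<Rightarrow> real) \<Rightarrow> 'a \<times> 'a \<times> 'a \<Rightarrow> real" where
  "eta_law E ob P \<mu> s =
     (case s of (i, j, \<delta>) \<Rightarrow>
        (if \<delta> = ob then \<mu> i * P i j else 0) + (if \<delta> \<in> E then \<mu> i * P i \<delta> * \<mu> j else 0))"

end

theory Submission
  imports Defs
begin

(* Both entropy rates reduce to three quantities: the mean row entropy
   sum_j mu(j) H(P(j,.)), the entropy H(mu), and the entropy H(q) of q = pi(.|E).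
   For X, the rows i in I of P^pi are rows of P with weight pi(i) = gamma mu(i), and every
   row in E equals pi, with total weight pi(E) = 1 - gamma.  Since pi is gamma mu on I and
   (1 - gamma) q on E, the grouping rule -(c p) ln(c p) = p (-c ln c) + c (-p ln p) expands
   H(pi).  For Y, the row of A at (i, j, delta) depends only on j and, by the same rule, has
   entropy H(P(j,.)) + P(j,E) H(mu); the j-marginal of eta is mu, because quasi-stationarity
   gives sum_i mu(i) P(i,j) = gamma mu(j) and hence sum_i mu(i) P(i,E) = 1 - gamma. *)

lemma nn_integral_count_space_Un:
  assumes "A \<inter> B = {}"
  shows "(\<integral>\<^sup>+x. f x \<partial>count_space (A \<union> B)) = (\<integral>\<^sup>+x. f x \<partial>count_space A) + (\<integral>\<^sup>+x. f x \<partial>count_space B)"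
  using nn_integral_disjoint_pair_countspace[OF assms, of f]
  by (simp add: nn_integral_count_space_indicator)

lemma nn_integral_count_space_swap:
  assumes "countable A"
  shows "(\<integral>\<^sup>+x. \<integral>\<^sup>+y. f x y \<partial>count_space B \<partial>count_space A)
       = (\<integral>\<^sup>+y. \<integral>\<^sup>+x. f x y \<partial>count_space A \<partial>count_space B)"
  using nn_integral_count_space_nn_integral[OF assms, of "\<lambda>x y. f x y" "count_space B"] by simp

lemma nn_integral_count_space_prod:
  assumes "countable A" "countable B"
  shows "(\<integral>\<^sup>+z. f z \<partial>count_space (A \<times> B)) = (\<integral>\<^sup>+x. \<integral>\<^sup>+y. f (x, y) \<partial>count_space B \<partial>count_space A)"
proof -
  interpret B: sigma_finite_measure "count_space B"
    using assms(2) by (rule sigma_finite_measure_count_space_countable)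
  show ?thesis
    using B.nn_integral_fst[of f "count_space A"] by (simp add: pair_measure_countable assms)
qed

lemma nn_integral_count_space_ge_point:
  assumes "x \<in> A"
  shows "f x \<le> (\<integral>\<^sup>+y. f y \<partial>count_space A)"
  using nn_integral_mono[of "count_space A" "\<lambda>y. f y * indicator {x} y" f] assms
  by (simp split: split_indicator)

lemma nn_integral_count_space_has_sum:
  assumes "(f has_sum s) A" "\<And>x. x \<in> A \<Longrightarrow> 0 \<le> f x"
  shows "(\<integral>\<^sup>+x. ennreal (f x) \<partial>count_space A) = ennreal s"
proof -
  have "Infinite_Sum.abs_summable_on f A"
    using has_sum_imp_summable[OF assms(1)] assms(2)
    by (metis (no_types, lifting) real_norm_def summable_on_cong abs_of_nonneg)
  then have "Infinite_Set_Sum.abs_summable_on f A" by (rule abs_summable_equivalent[THEN iffD1])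
  then show ?thesis
    using assms by (simp add: nn_integral_conv_infsetsum infsetsum_infsum infsumI)
qed

lemma nn_integral_count_space_eq_infsum:
  assumes "(\<integral>\<^sup>+x. ennreal (f x) \<partial>count_space A) \<noteq> \<infinity>" "\<And>x. x \<in> A \<Longrightarrow> 0 \<le> f x"
  shows "(\<integral>\<^sup>+x. ennreal (f x) \<partial>count_space A) = ennreal (\<Sum>\<^sub>\<infinity>x\<in>A. f x)"
proof -
  have "integrable (count_space A) f"
    using assms by (intro integrableI_nonneg) (auto simp: AE_count_space less_top)
  then have "Infinite_Set_Sum.abs_summable_on f A" by (simp add: abs_summable_on_def)
  then show ?thesis
    using assms by (simp add: nn_integral_conv_infsetsum infsetsum_infsum)
qed

definition discrete_entropy :: "('s \<Rightarrow> real) \<Rightarrow> 's set \<Rightarrow> ennreal" where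
  "discrete_entropy p A = (\<integral>\<^sup>+x. ennreal (- (p x * ln (p x))) \<partial>count_space A)"

lemma ent_rate_eq_discrete_entropy:
  "ent_rate R \<nu> S = (\<integral>\<^sup>+a. ennreal (\<nu> a) * discrete_entropy (R a) S \<partial>count_space S)"
  by (simp add: ent_rate_def discrete_entropy_def)

lemma discrete_entropy_cong:
  "(\<And>x. x \<in> A \<Longrightarrow> p x = p' x) \<Longrightarrow> discrete_entropy p A = discrete_entropy p' A"
  unfolding discrete_entropy_def by (intro nn_integral_cong) simp

lemma discrete_entropy_Un:
  "A \<inter> B = {} \<Longrightarrow> discrete_entropy p (A \<union> B) = discrete_entropy p A + discrete_entropy p B"
  unfolding discrete_entropy_def by (rule nn_integral_count_space_Un)

lemma neg_mult_ln_nonneg: "0 \<le> x \<Longrightarrow> x \<le> (1::real) \<Longrightarrow> 0 \<le> - (x * ln x)"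
  by (cases "x = 0") (auto simp: mult_nonneg_nonpos)

lemma ennreal_neg_mult_ln_mult:
  fixes x y :: real
  assumes "0 \<le> x" "x \<le> 1" "0 \<le> y" "y \<le> 1"
  shows "ennreal (- (x * y * ln (x * y)))
       = ennreal y * ennreal (- (x * ln x)) + ennreal x * ennreal (- (y * ln y))"
proof (cases "x = 0 \<or> y = 0")
  case True
  then show ?thesis by auto
next
  case False
  with assms have split: "- (x * y * ln (x * y)) = y * - (x * ln x) + x * - (y * ln y)"
    by (simp add: ln_mult algebra_simps)
  have hx: "0 \<le> - (x * ln x)" and hy: "0 \<le> - (y * ln y)"
    using neg_mult_ln_nonneg assms by auto
  show ?thesis
    unfolding split ennreal_plus[OF mult_nonneg_nonneg[OF assms(3) hx] mult_nonneg_nonneg[OF assms(1) hy]]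
      ennreal_mult[OF assms(3) hx] ennreal_mult[OF assms(1) hy] ..
qed

lemma discrete_entropy_scaled:
  assumes p_nonneg: "\<And>x. x \<in> A \<Longrightarrow> 0 \<le> p x"
    and p_sum: "(\<integral>\<^sup>+x. ennreal (p x) \<partial>count_space A) = 1"
    and c: "0 \<le> c" "c \<le> 1"
  shows "discrete_entropy (\<lambda>x. c * p x) A = ennreal (- (c * ln c)) + ennreal c * discrete_entropy p A"
proof -
  have p_le: "p x \<le> 1" if "x \<in> A" for x
    using nn_integral_count_space_ge_point[OF that, of "\<lambda>x. ennreal (p x)"] p_sum by simp
  have "discrete_entropy (\<lambda>x. c * p x) A
      = (\<integral>\<^sup>+x. ennreal (p x) * ennreal (- (c * ln c)) + ennreal c * ennreal (- (p x * ln (p x)))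
          \<partial>count_space A)"
    unfolding discrete_entropy_def
    using ennreal_neg_mult_ln_mult[OF c] p_nonneg p_le by (intro nn_integral_cong) simp
  also have "\<dots> = ennreal (- (c * ln c)) + ennreal c * discrete_entropy p A"
    by (simp add: nn_integral_add nn_integral_multc nn_integral_cmult p_sum discrete_entropy_def)
  finally show ?thesis .
qed

lemma ent_rate_iid:
  assumes "(\<integral>\<^sup>+x. ennreal (q x) \<partial>count_space A) = 1"
  shows "ent_rate (\<lambda>a. q) q A = discrete_entropy q A"
  by (simp add: ent_rate_eq_discrete_entropy nn_integral_multc assms)

(* Only the rows of P indexed by I matter, since P^pi replaces the others by pi. *)
locale quasi_stationary =
  fixes I E :: "'a set" and P :: "'a \<Rightarrow> 'a \<Rightarrow> real" and \<mu> :: "'a \<Rightarrow> real"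
  assumes countable_I: "countable I" and countable_E: "countable E"
    and disjoint: "I \<inter> E = {}"
    and P_nonneg: "\<And>i y. i \<in> I \<Longrightarrow> y \<in> I \<union> E \<Longrightarrow> 0 \<le> P i y"
    and P_stochastic: "\<And>i. i \<in> I \<Longrightarrow> (P i has_sum 1) (I \<union> E)"
    and mu_nonneg: "\<And>i. i \<in> I \<Longrightarrow> 0 \<le> \<mu> i"
    and mu_prob: "(\<mu> has_sum 1) I"
    and mu_quasi_stationary: "\<And>j. j \<in> I \<Longrightarrow> ((\<lambda>i. \<mu> i * P i j) has_sum qsd_gamma I P \<mu> * \<mu> j) I"
    and gamma_less_1: "qsd_gamma I P \<mu> < 1"
begin

abbreviation \<gamma> :: real where "\<gamma> \<equiv> qsd_gamma I P \<mu>"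
abbreviation \<pi> :: "'a \<Rightarrow> real" where "\<pi> \<equiv> pi_law I E P \<mu>"

definition exit_prob :: "'a \<Rightarrow> ennreal" where
  "exit_prob i = (\<integral>\<^sup>+y. ennreal (P i y) \<partial>count_space E)"

definition pi_cond_E :: "'a \<Rightarrow> real" where
  "pi_cond_E \<delta> = \<pi> \<delta> / (1 - \<gamma>)"

definition mean_row_entropy :: ennreal where
  "mean_row_entropy = (\<integral>\<^sup>+j. ennreal (\<mu> j) * discrete_entropy (P j) (I \<union> E) \<partial>count_space I)"

lemma gamma_nonneg: "0 \<le> \<gamma>"
  unfolding qsd_gamma_def using mu_nonneg P_nonneg by (intro infsum_nonneg) auto

lemma pi_I: "i \<in> I \<Longrightarrow> \<pi> i = \<gamma> * \<mu> i"
  by (simp add: pi_law_def)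

lemma pi_E: "e \<in> E \<Longrightarrow> \<pi> e = (\<Sum>\<^sub>\<infinity>i\<in>I. \<mu> i * P i e)"
  using disjoint by (auto simp: pi_law_def)

lemma nn_integral_mu: "(\<integral>\<^sup>+i. ennreal (\<mu> i) \<partial>count_space I) = 1"
  using nn_integral_count_space_has_sum[OF mu_prob] mu_nonneg by simp

lemma nn_integral_row: "i \<in> I \<Longrightarrow> (\<integral>\<^sup>+y. ennreal (P i y) \<partial>count_space (I \<union> E)) = 1"
  using nn_integral_count_space_has_sum[OF P_stochastic[of i]] P_nonneg[of i] by simp

lemma P_le_1: "i \<in> I \<Longrightarrow> y \<in> I \<union> E \<Longrightarrow> P i y \<le> 1"
  using nn_integral_count_space_ge_point[of y "I \<union> E" "\<lambda>y. ennreal (P i y)"] nn_integral_row[of i]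
  by simp

lemma nn_integral_mu_P: "j \<in> I \<Longrightarrow> (\<integral>\<^sup>+i. ennreal (\<mu> i * P i j) \<partial>count_space I) = ennreal (\<gamma> * \<mu> j)"
  using nn_integral_count_space_has_sum[OF mu_quasi_stationary[of j]] mu_nonneg P_nonneg by auto

lemma nn_integral_mu_times_row:
  assumes "A \<subseteq> I \<union> E"
  shows "(\<integral>\<^sup>+i. ennreal (\<mu> i) * (\<integral>\<^sup>+y. ennreal (P i y) \<partial>count_space A) \<partial>count_space I)
       = (\<integral>\<^sup>+y. \<integral>\<^sup>+i. ennreal (\<mu> i * P i y) \<partial>count_space I \<partial>count_space A)"
proof -
  have "(\<integral>\<^sup>+i. ennreal (\<mu> i) * (\<integral>\<^sup>+y. ennreal (P i y) \<partial>count_space A) \<partial>count_space I)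
      = (\<integral>\<^sup>+i. \<integral>\<^sup>+y. ennreal (\<mu> i * P i y) \<partial>count_space A \<partial>count_space I)"
    using assms mu_nonneg P_nonneg
    by (intro nn_integral_cong) (auto simp: nn_integral_cmult[symmetric] ennreal_mult intro!: nn_integral_cong)
  also have "\<dots> = (\<integral>\<^sup>+y. \<integral>\<^sup>+i. ennreal (\<mu> i * P i y) \<partial>count_space I \<partial>count_space A)"
    by (rule nn_integral_count_space_swap[OF countable_I])
  finally show ?thesis .
qed

lemma mass_staying: "(\<integral>\<^sup>+i. ennreal (\<mu> i) * (\<integral>\<^sup>+y. ennreal (P i y) \<partial>count_space I) \<partial>count_space I) = \<gamma>"
proof -
  have "(\<integral>\<^sup>+i. ennreal (\<mu> i) * (\<integral>\<^sup>+y. ennreal (P i y) \<partial>count_space I) \<partial>count_space I)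
      = (\<integral>\<^sup>+y. ennreal \<gamma> * ennreal (\<mu> y) \<partial>count_space I)"
    unfolding nn_integral_mu_times_row[OF Un_upper1]
    using gamma_nonneg mu_nonneg by (intro nn_integral_cong) (simp add: nn_integral_mu_P ennreal_mult)
  also have "\<dots> = \<gamma>"
    by (simp add: nn_integral_cmult nn_integral_mu)
  finally show ?thesis .
qed

lemma mass_exiting: "(\<integral>\<^sup>+i. ennreal (\<mu> i) * exit_prob i \<partial>count_space I) = 1 - \<gamma>"
proof -
  have row_split: "(\<integral>\<^sup>+y. ennreal (P i y) \<partial>count_space I) + exit_prob i = 1" if "i \<in> I" for i
    using nn_integral_row[of i] nn_integral_count_space_Un[OF disjoint] that by (simp add: exit_prob_def)
  have "1 = (\<integral>\<^sup>+i. ennreal (\<mu> i) * ((\<integral>\<^sup>+y. ennreal (P i y) \<partial>count_space I) + exit_prob i) \<partial>count_space I)"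
    by (subst nn_integral_mu[symmetric]) (intro nn_integral_cong, simp add: row_split)
  also have "\<dots> = (\<integral>\<^sup>+i. ennreal (\<mu> i) * exit_prob i \<partial>count_space I) + \<gamma>"
    by (simp add: distrib_left nn_integral_add mass_staying add.commute)
  finally show ?thesis
    using gamma_nonneg by (cases "\<integral>\<^sup>+i. ennreal (\<mu> i) * exit_prob i \<partial>count_space I")
      (auto simp: ennreal_plus[symmetric] simp del: ennreal_plus)
qed

lemma ennreal_pi_E:
  assumes "e \<in> E"
  shows "ennreal (\<pi> e) = (\<integral>\<^sup>+i. ennreal (\<mu> i * P i e) \<partial>count_space I)"
proof -
  have "(\<integral>\<^sup>+i. ennreal (\<mu> i * P i e) \<partial>count_space I) \<le> (\<integral>\<^sup>+i. ennreal (\<mu> i) \<partial>count_space I)"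
    using assms mu_nonneg P_le_1 by (intro nn_integral_mono ennreal_leI) (auto simp: mult_left_le)
  then have "(\<integral>\<^sup>+i. ennreal (\<mu> i * P i e) \<partial>count_space I) \<noteq> \<infinity>"
    using nn_integral_mu by (auto simp: top_unique)
  then have "(\<integral>\<^sup>+i. ennreal (\<mu> i * P i e) \<partial>count_space I) = ennreal (\<Sum>\<^sub>\<infinity>i\<in>I. \<mu> i * P i e)"
    by (rule nn_integral_count_space_eq_infsum) (use assms mu_nonneg P_nonneg in auto)
  then show ?thesis
    using pi_E[OF assms] by simp
qed

lemma pi_E_nonneg: "e \<in> E \<Longrightarrow> 0 \<le> \<pi> e"
  using pi_E mu_nonneg P_nonneg by (auto intro!: infsum_nonneg)

lemma nn_integral_pi_E: "(\<integral>\<^sup>+e. ennreal (\<pi> e) \<partial>count_space E) = 1 - \<gamma>"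
proof -
  have "(\<integral>\<^sup>+e. ennreal (\<pi> e) \<partial>count_space E)
      = (\<integral>\<^sup>+e. \<integral>\<^sup>+i. ennreal (\<mu> i * P i e) \<partial>count_space I \<partial>count_space E)"
    by (intro nn_integral_cong) (simp add: ennreal_pi_E)
  then show ?thesis
    using nn_integral_mu_times_row[OF Un_upper2] mass_exiting by (simp add: exit_prob_def)
qed

lemma infsum_pi_E: "(\<Sum>\<^sub>\<infinity>e\<in>E. \<pi> e) = 1 - \<gamma>"
proof -
  have "ennreal (\<Sum>\<^sub>\<infinity>e\<in>E. \<pi> e) = ennreal (1 - \<gamma>)"
    using nn_integral_count_space_eq_infsum[of E \<pi>] nn_integral_pi_E pi_E_nonneg by simp
  then show ?thesis
    using gamma_less_1 pi_E_nonneg by (simp add: ennreal_inj infsum_nonneg)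
qed

lemma infsum_pi_I: "(\<Sum>\<^sub>\<infinity>i\<in>I. \<pi> i) = \<gamma>"
  using has_sum_cmult_right[OF mu_prob, of \<gamma>] by (simp add: pi_I infsumI cong: infsum_cong)

lemma pi_cond_E_nonneg: "e \<in> E \<Longrightarrow> 0 \<le> pi_cond_E e"
  using pi_E_nonneg gamma_less_1 by (simp add: pi_cond_E_def)

lemma nn_integral_pi_cond_E: "(\<integral>\<^sup>+e. ennreal (pi_cond_E e) \<partial>count_space E) = 1"
proof -
  have "(\<integral>\<^sup>+e. ennreal (pi_cond_E e) \<partial>count_space E)
      = (\<integral>\<^sup>+e. ennreal (\<pi> e) * ennreal (1 / (1 - \<gamma>)) \<partial>count_space E)"
    using pi_E_nonneg gamma_less_1
    by (intro nn_integral_cong) (simp add: pi_cond_E_def ennreal_mult[symmetric])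
  also have "\<dots> = 1"
    using gamma_less_1 by (simp add: nn_integral_multc nn_integral_pi_E ennreal_mult[symmetric])
  finally show ?thesis .
qed

lemma discrete_entropy_pi:
  "discrete_entropy \<pi> (I \<union> E)
     = ennreal (- (\<gamma> * ln \<gamma>)) + ennreal \<gamma> * discrete_entropy \<mu> I
       + ennreal (- ((1 - \<gamma>) * ln (1 - \<gamma>))) + ennreal (1 - \<gamma>) * discrete_entropy pi_cond_E E"
proof -
  have "discrete_entropy \<pi> I = discrete_entropy (\<lambda>i. \<gamma> * \<mu> i) I"
    by (rule discrete_entropy_cong) (simp add: pi_I)
  also have "\<dots> = ennreal (- (\<gamma> * ln \<gamma>)) + ennreal \<gamma> * discrete_entropy \<mu> I"
    using mu_nonneg nn_integral_mu gamma_nonneg gamma_less_1 by (intro discrete_entropy_scaled) auto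
  finally have I_part: "discrete_entropy \<pi> I = \<dots>" .
  have "discrete_entropy \<pi> E = discrete_entropy (\<lambda>e. (1 - \<gamma>) * pi_cond_E e) E"
    using gamma_less_1 by (intro discrete_entropy_cong) (simp add: pi_cond_E_def)
  also have "\<dots> = ennreal (- ((1 - \<gamma>) * ln (1 - \<gamma>))) + ennreal (1 - \<gamma>) * discrete_entropy pi_cond_E E"
    using pi_cond_E_nonneg nn_integral_pi_cond_E gamma_nonneg gamma_less_1
    by (intro discrete_entropy_scaled) auto
  finally have E_part: "discrete_entropy \<pi> E = \<dots>" .
  show ?thesis
    by (simp add: discrete_entropy_Un[OF disjoint] I_part E_part add.assoc)
qed

lemma P_pi_row_I: "i \<in> I \<Longrightarrow> P_pi I E P \<mu> i = P i"
  using disjoint by (auto simp: P_pi_def fun_eq_iff)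

lemma P_pi_row_E: "e \<in> E \<Longrightarrow> P_pi I E P \<mu> e = \<pi>"
  by (simp add: P_pi_def fun_eq_iff)

lemma ent_rate_P_pi:
  "ent_rate (P_pi I E P \<mu>) \<pi> (I \<union> E)
     = ennreal \<gamma> * mean_row_entropy + ennreal (1 - \<gamma>) * discrete_entropy \<pi> (I \<union> E)"
proof -
  have "ent_rate (P_pi I E P \<mu>) \<pi> (I \<union> E)
      = (\<integral>\<^sup>+a. ennreal \<gamma> * (ennreal (\<mu> a) * discrete_entropy (P a) (I \<union> E)) \<partial>count_space I)
        + (\<integral>\<^sup>+a. ennreal (\<pi> a) * discrete_entropy \<pi> (I \<union> E) \<partial>count_space E)"
    unfolding ent_rate_eq_discrete_entropy nn_integral_count_space_Un[OF disjoint]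
    using pi_I gamma_nonneg mu_nonneg
    by (intro arg_cong2[where f = "(+)"] nn_integral_cong)
      (auto simp: P_pi_row_I P_pi_row_E ennreal_mult mult.assoc)
  then show ?thesis
    by (simp add: nn_integral_cmult nn_integral_multc mean_row_entropy_def nn_integral_pi_E)
qed

lemma discrete_entropy_A_row_nested:
  assumes ob: "ob \<notin> E" and j: "j \<in> I"
  shows "discrete_entropy (A_mat ob P \<mu> (i, j, \<delta>)) (I \<times> I \<times> (E \<union> {ob}))
       = (\<integral>\<^sup>+k. (\<integral>\<^sup>+\<epsilon>. ennreal (- (P j \<epsilon> * \<mu> k * ln (P j \<epsilon> * \<mu> k))) \<partial>count_space E)
                 + ennreal (- (P j k * ln (P j k))) \<partial>count_space I)"
    (is "_ = (\<integral>\<^sup>+k. ?C k \<partial>count_space I)")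
proof -
  have countable: "countable (E \<union> {ob})" "countable (I \<times> (E \<union> {ob}))"
    using countable_I countable_E by auto
  have disjoint_ob: "E \<inter> {ob} = {}"
    using ob by simp
  have inner: "(\<integral>\<^sup>+\<epsilon>. ennreal (- (A_mat ob P \<mu> (i, j, \<delta>) (j, k, \<epsilon>) * ln (A_mat ob P \<mu> (i, j, \<delta>) (j, k, \<epsilon>))))
                  \<partial>count_space (E \<union> {ob})) = ?C k" for k
    unfolding nn_integral_count_space_Un[OF disjoint_ob] using ob
    by (intro arg_cong2[where f = "(+)"] nn_integral_cong)
      (auto simp: A_mat_def nn_integral_count_space_finite)
  have "discrete_entropy (A_mat ob P \<mu> (i, j, \<delta>)) (I \<times> I \<times> (E \<union> {ob}))
      = (\<integral>\<^sup>+l. (\<integral>\<^sup>+k. ?C k \<partial>count_space I) * indicator {j} l \<partial>count_space I)"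
    unfolding discrete_entropy_def nn_integral_count_space_prod[OF countable_I countable(2)]
      nn_integral_count_space_prod[OF countable_I countable(1)]
  proof (intro nn_integral_cong)
    fix l
    show "(\<integral>\<^sup>+k. \<integral>\<^sup>+\<epsilon>. ennreal (- (A_mat ob P \<mu> (i, j, \<delta>) (l, k, \<epsilon>) * ln (A_mat ob P \<mu> (i, j, \<delta>) (l, k, \<epsilon>))))
            \<partial>count_space (E \<union> {ob}) \<partial>count_space I)
        = (\<integral>\<^sup>+k. ?C k \<partial>count_space I) * indicator {j} l"
      using inner by (cases "l = j") (simp_all add: A_mat_def)
  qed
  also have "\<dots> = (\<integral>\<^sup>+k. ?C k \<partial>count_space I)"
    using j by simp
  finally show ?thesis .
qed

lemma discrete_entropy_A_row:
  assumes ob: "ob \<notin> E" and j: "j \<in> I"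
  shows "discrete_entropy (A_mat ob P \<mu> (i, j, \<delta>)) (I \<times> I \<times> (E \<union> {ob}))
       = discrete_entropy (P j) (I \<union> E) + exit_prob j * discrete_entropy \<mu> I"
proof -
  have "(\<integral>\<^sup>+k. \<integral>\<^sup>+\<epsilon>. ennreal (- (P j \<epsilon> * \<mu> k * ln (P j \<epsilon> * \<mu> k))) \<partial>count_space E \<partial>count_space I)
      = (\<integral>\<^sup>+\<epsilon>. discrete_entropy (\<lambda>k. P j \<epsilon> * \<mu> k) I \<partial>count_space E)"
    unfolding discrete_entropy_def by (rule nn_integral_count_space_swap[OF countable_I])
  also have "\<dots> = (\<integral>\<^sup>+\<epsilon>. ennreal (- (P j \<epsilon> * ln (P j \<epsilon>))) + ennreal (P j \<epsilon>) * discrete_entropy \<mu> I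
                     \<partial>count_space E)"
    using j mu_nonneg nn_integral_mu P_nonneg P_le_1
    by (intro nn_integral_cong discrete_entropy_scaled) auto
  also have "\<dots> = discrete_entropy (P j) E + exit_prob j * discrete_entropy \<mu> I"
    by (simp add: nn_integral_add nn_integral_multc discrete_entropy_def exit_prob_def)
  finally show ?thesis
    unfolding discrete_entropy_A_row_nested[OF assms] discrete_entropy_Un[OF disjoint]
    by (simp add: nn_integral_add discrete_entropy_def add_ac)
qed

lemma eta_marginal:
  assumes ob: "ob \<notin> E" and j: "j \<in> I"
  shows "(\<integral>\<^sup>+i. \<integral>\<^sup>+\<delta>. ennreal (eta_law E ob P \<mu> (i, j, \<delta>)) \<partial>count_space (E \<union> {ob}) \<partial>count_space I) = \<mu> j"
proof -
  have disjoint_ob: "E \<inter> {ob} = {}"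
    using ob by simp
  have "(\<integral>\<^sup>+\<delta>. ennreal (eta_law E ob P \<mu> (i, j, \<delta>)) \<partial>count_space (E \<union> {ob}))
      = ennreal (\<mu> j) * (ennreal (\<mu> i) * exit_prob i) + ennreal (\<mu> i * P i j)" if i: "i \<in> I" for i
  proof -
    have "(\<integral>\<^sup>+\<delta>. ennreal (eta_law E ob P \<mu> (i, j, \<delta>)) \<partial>count_space E)
        = (\<integral>\<^sup>+\<delta>. ennreal (\<mu> j) * (ennreal (\<mu> i) * ennreal (P i \<delta>)) \<partial>count_space E)"
      using ob i j mu_nonneg P_nonneg
      by (intro nn_integral_cong) (auto simp: eta_law_def ennreal_mult[symmetric] mult_ac)
    then show ?thesis
      unfolding nn_integral_count_space_Un[OF disjoint_ob]
      using ob by (simp add: nn_integral_cmult exit_prob_def nn_integral_count_space_finite eta_law_def)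
  qed
  then have "(\<integral>\<^sup>+i. \<integral>\<^sup>+\<delta>. ennreal (eta_law E ob P \<mu> (i, j, \<delta>)) \<partial>count_space (E \<union> {ob}) \<partial>count_space I)
      = (\<integral>\<^sup>+i. ennreal (\<mu> j) * (ennreal (\<mu> i) * exit_prob i) + ennreal (\<mu> i * P i j) \<partial>count_space I)"
    by (intro nn_integral_cong) simp
  also have "\<dots> = ennreal (\<mu> j) * ennreal (1 - \<gamma>) + ennreal (\<gamma> * \<mu> j)"
    using j by (simp add: nn_integral_add nn_integral_cmult nn_integral_mu_P mass_exiting)
  also have "\<dots> = ennreal (\<mu> j * (1 - \<gamma>) + \<gamma> * \<mu> j)"
    using j mu_nonneg gamma_nonneg gamma_less_1 by (simp add: ennreal_mult ennreal_plus)
  also have "\<mu> j * (1 - \<gamma>) + \<gamma> * \<mu> j = \<mu> j"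
    by (simp add: algebra_simps)
  finally show ?thesis .
qed

lemma ent_rate_A:
  assumes ob: "ob \<notin> E"
  shows "ent_rate (A_mat ob P \<mu>) (eta_law E ob P \<mu>) (I \<times> I \<times> (E \<union> {ob}))
       = mean_row_entropy + ennreal (1 - \<gamma>) * discrete_entropy \<mu> I"
proof -
  define H where "H j = discrete_entropy (P j) (I \<union> E) + exit_prob j * discrete_entropy \<mu> I" for j
  have countable: "countable (E \<union> {ob})" "countable (I \<times> (E \<union> {ob}))"
    using countable_I countable_E by auto
  have "ent_rate (A_mat ob P \<mu>) (eta_law E ob P \<mu>) (I \<times> I \<times> (E \<union> {ob}))
      = (\<integral>\<^sup>+i. \<integral>\<^sup>+j. \<integral>\<^sup>+\<delta>. ennreal (eta_law E ob P \<mu> (i, j, \<delta>)) * H j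
           \<partial>count_space (E \<union> {ob}) \<partial>count_space I \<partial>count_space I)"
    unfolding ent_rate_eq_discrete_entropy nn_integral_count_space_prod[OF countable_I countable(2)]
      nn_integral_count_space_prod[OF countable_I countable(1)]
    using discrete_entropy_A_row[OF ob] by (intro nn_integral_cong) (simp add: H_def)
  also have "\<dots> = (\<integral>\<^sup>+j. (\<integral>\<^sup>+i. \<integral>\<^sup>+\<delta>. ennreal (eta_law E ob P \<mu> (i, j, \<delta>))
                        \<partial>count_space (E \<union> {ob}) \<partial>count_space I) * H j \<partial>count_space I)"
    by (simp add: nn_integral_multc nn_integral_count_space_swap[OF countable_I])
  also have "\<dots> = (\<integral>\<^sup>+j. ennreal (\<mu> j) * H j \<partial>count_space I)"
    using eta_marginal[OF ob] by (intro nn_integral_cong) simp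
  also have "\<dots> = mean_row_entropy + ennreal (1 - \<gamma>) * discrete_entropy \<mu> I"
    by (simp add: H_def distrib_left nn_integral_add nn_integral_multc mean_row_entropy_def
        mult.assoc[symmetric] mass_exiting)
  finally show ?thesis .
qed

end

theorem proposition5:
  fixes I E :: "'a set" and ob :: 'a
    and P :: "'a \<Rightarrow> 'a \<Rightarrow> real" and \<mu> :: "'a \<Rightarrow> real"
  assumes cI: "countable I" and cE: "countable E"
    and disj: "I \<inter> E = {}" and Ene: "E \<noteq> {}"
    and ob: "ob \<notin> I \<union> E"
    and P_nonneg: "\<And>x y. x \<in> I \<union> E \<Longrightarrow> y \<in> I \<union> E \<Longrightarrow> P x y \<ge> 0"
    and P_stoch: "\<And>x. x \<in> I \<union> E \<Longrightarrow> (P x has_sum 1) (I \<union> E)"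
    and absorbing: "\<And>\<epsilon>. \<epsilon> \<in> E \<Longrightarrow> P \<epsilon> \<epsilon> = 1"
    and irred: "\<And>i j. i \<in> I \<Longrightarrow> j \<in> I \<Longrightarrow>
                 (i, j) \<in> {(x, y). x \<in> I \<and> y \<in> I \<and> P x y > 0}\<^sup>*"
    and exits: "\<exists>i\<in>I. \<exists>\<epsilon>\<in>E. P i \<epsilon> > 0"
    and absorb_as: "\<And>i. i \<in> I \<Longrightarrow> (\<lambda>n. hit_prob I E P n i) \<longlonglongrightarrow> 1"
    and mu_nonneg: "\<And>i. i \<in> I \<Longrightarrow> \<mu> i \<ge> 0"
    and mu_prob: "(\<mu> has_sum 1) I"
    and qsd: "\<And>j. j \<in> I \<Longrightarrow> ((\<lambda>i. \<mu> i * P i j) has_sum qsd_gamma I P \<mu> * \<mu> j) I"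
    and gamma: "0 < qsd_gamma I P \<mu>" "qsd_gamma I P \<mu> < 1"
  shows
    "let \<pi> = pi_law I E P \<mu>;
         \<pi>I = (\<Sum>\<^sub>\<infinity> x \<in> I. \<pi> x);
         \<pi>E = (\<Sum>\<^sub>\<infinity> x \<in> E. \<pi> x);
         q = (\<lambda>\<delta>. \<pi> \<delta> / \<pi>E)
     in ent_rate (P_pi I E P \<mu>) \<pi> (I \<union> E)
        = ennreal \<pi>I * ent_rate (A_mat ob P \<mu>) (eta_law E ob P \<mu>) (I \<times> I \<times> (E \<union> {ob}))
          + ennreal (\<pi>E ^ 2) * ent_rate (\<lambda>a b. q b) q E
          + ennreal (- (\<pi>I * \<pi>E * ln \<pi>I))
          + ennreal (- (\<pi>E ^ 2 * ln \<pi>E))"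
proof -
  interpret quasi_stationary I E P \<mu>
    by unfold_locales (use cI cE disj P_nonneg P_stoch mu_nonneg mu_prob qsd gamma in auto)
  have ob_E: "ob \<notin> E"
    using ob by simp
  have cond_law: "(\<lambda>\<delta>. \<pi> \<delta> / (1 - \<gamma>)) = pi_cond_E"
    by (simp add: fun_eq_iff pi_cond_E_def)
  have nonneg: "0 \<le> 1 - \<gamma>"
    using gamma by simp
  have "ennreal ((1 - \<gamma>) ^ 2) = ennreal (1 - \<gamma>) * ennreal (1 - \<gamma>)"
    using ennreal_mult'[OF nonneg, of "1 - \<gamma>"] by (simp add: power2_eq_square)
  moreover have "ennreal (- (\<gamma> * (1 - \<gamma>) * ln \<gamma>)) = ennreal (1 - \<gamma>) * ennreal (- (\<gamma> * ln \<gamma>))"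
    using ennreal_mult'[OF nonneg, of "- (\<gamma> * ln \<gamma>)"] by (simp add: mult_ac)
  moreover have "ennreal (- ((1 - \<gamma>) ^ 2 * ln (1 - \<gamma>)))
      = ennreal (1 - \<gamma>) * ennreal (- ((1 - \<gamma>) * ln (1 - \<gamma>)))"
    using ennreal_mult'[OF nonneg, of "- ((1 - \<gamma>) * ln (1 - \<gamma>))"] by (simp add: power2_eq_square mult_ac)
  ultimately show ?thesis
    unfolding Let_def infsum_pi_I infsum_pi_E cond_law ent_rate_iid[OF nn_integral_pi_cond_E]
      ent_rate_P_pi ent_rate_A[OF ob_E] discrete_entropy_pi
    by (simp add: algebra_simps)
qed

end
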